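(* Let $k\ge 2$ and $\Delta\ge 2$ be integers. For $n\ge 0$ let $p_n=\mu_n(\sigma_\rho=1\mid \sigma_{L_n}=1)$, where $\sigma_{L_n}=1$ means that every vertex of $L_n$ is in the independent set. Then the independent set model has uniqueness on $\mathbb{T}_{k,\Delta}$ if and only if $\limsup_{n\to\infty}|p_{n+1}-p_n|=0$.
   Context: $\mathbb{T}_{k,\Delta}$ is the infinite $(\Delta-1)$-ary $k$-uniform hypertree with root $\rho$: recursively, each vertex has $\Delta-1$ descending hyperedges, each consisting of that vertex together with $k-1$ new vertices (its children). For $n\ge 0$, $\mathbb{T}(n)$ is the finite sub-hypergraph induced by the vertices at distance at most $n$ from $\rho$ (i.e. the first $n$ generations below $\rho$), with vertex set $V_n$, and $L_n$ is the set of vertices at distance exactly $n$ from $\rho$ (its leaves). Independent sets of a hypergraph are vertex subsets containing no hyperedge; an independent set $I$ is identified with $\sigma:V_n\to\{0,1\}$, $\sigma(v)=1$ iff $v\in I$. $\mu_n$ is the uniform distribution on independent sets of $\mathbb{T}(n)$. The independent set model has uniqueness on $\mathbb{T}_{k,\Delta}$ iff $\limsup_{n\to\infty}\max_{\eta,\eta':L_n\to\{0,1\}}|\mu_n(\sigma_\rho=1\mid\sigma_{L_n}=\eta)-\mu_n(\sigma_\rho=1\mid\sigma_{L_n}=\eta')|=0$, where $\sigma_\rho$ is the spin of the root and $\sigma_{L_n}$ the restriction of $\sigma$ to $L_n$. *)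

theory Defs
  imports Complex_Main "HOL-Library.Extended_Real" "HOL-Library.Liminf_Limsup"
begin

text \<open>Vertices of the infinite (Delta-1)-ary k-uniform hypertree are encoded as finite
  lists of pairs (a, b): starting at the root [], the pair (a, b) means
  "go down the descending hyperedge number a (a < Delta - 1) to its child number b
  (b < k - 1)".\<close>

definition hvert :: "nat \<Rightarrow> nat \<Rightarrow> nat \<Rightarrow> (nat \<times> nat) list set" where
  "hvert k \<Delta> n = {xs. length xs \<le> n \<and> (\<forall>(a, b)\<in>set xs. a < \<Delta> - 1 \<and> b < k - 1)}"

definition hleaves :: "nat \<Rightarrow> nat \<Rightarrow> nat \<Rightarrow> (nat \<times> nat) list set" where
  "hleaves k \<Delta> n = {xs \<in> hvert k \<Delta> n. length xs = n}"

definition hedges :: "nat \<Rightarrow> nat \<Rightarrow> nat \<Rightarrow> (nat \<times> nat) list set set" where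
  "hedges k \<Delta> n = {insert v {v @ [(a, b)] | b. b < k - 1} | v a.
      v \<in> hvert k \<Delta> n \<and> length v < n \<and> a < \<Delta> - 1}"

definition hindep :: "nat \<Rightarrow> nat \<Rightarrow> nat \<Rightarrow> (nat \<times> nat) list set \<Rightarrow> bool" where
  "hindep k \<Delta> n I \<longleftrightarrow> I \<subseteq> hvert k \<Delta> n \<and> (\<forall>e\<in>hedges k \<Delta> n. \<not> e \<subseteq> I)"

text \<open>mu_n(sigma_rho = 1 | sigma_{L_n} = eta) under the uniform distribution on
  independent sets of T(n); the boundary condition eta : L_n -> {0,1} is identified
  with the set eta of leaves receiving spin 1.\<close>
definition hcond :: "nat \<Rightarrow> nat \<Rightarrow> nat \<Rightarrow> (nat \<times> nat) list set \<Rightarrow> real" where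
  "hcond k \<Delta> n \<eta> =
     real (card {I. hindep k \<Delta> n I \<and> [] \<in> I \<and> I \<inter> hleaves k \<Delta> n = \<eta>})
     / real (card {I. hindep k \<Delta> n I \<and> I \<inter> hleaves k \<Delta> n = \<eta>})"

definition huniqueness :: "nat \<Rightarrow> nat \<Rightarrow> bool" where
  "huniqueness k \<Delta> \<longleftrightarrow>
     limsup (\<lambda>n. ereal (Max {\<bar>hcond k \<Delta> n \<eta> - hcond k \<Delta> n \<eta>'\<bar> | \<eta> \<eta>'.
        \<eta> \<subseteq> hleaves k \<Delta> n \<and> \<eta>' \<subseteq> hleaves k \<Delta> n})) = 0"

definition hp :: "nat \<Rightarrow> nat \<Rightarrow> nat \<Rightarrow> real" where
  "hp k \<Delta> n = hcond k \<Delta> n (hleaves k \<Delta> n)"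

end

theory Submission
  imports Defs "HOL-Library.FuncSet"
begin

text \<open>Conditioning on the leaves, the root marginals satisfy the tree recursion
  \<open>p = R / (1 + R)\<close> with \<open>R = \<Prod>\<^sub>a (1 - \<Prod>\<^sub>b p\<^sub>a\<^sub>b)\<close> over the children, which is antitone
  in every child marginal. By induction on the depth, every boundary condition therefore
  yields a root marginal between those of the two extreme boundaries, all leaves occupied
  and all leaves empty, so the worst discrepancy at depth \<open>n\<close> is attained by this pair.
  Finally, occupying all leaves at depth \<open>n + 1\<close> forces their parents out, and the
  recursion at depth \<open>n + 1\<close> with all leaves occupied coincides with the one at depth
  \<open>n\<close> with all leaves empty; hence that discrepancy equals \<open>\<bar>p\<^sub>n\<^sub>+\<^sub>1 - p\<^sub>n\<bar>\<close>.\<close>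

subsection \<open>Decomposing a vertex set at the root\<close>

definition subtree :: "nat \<times> nat \<Rightarrow> (nat \<times> nat) list set \<Rightarrow> (nat \<times> nat) list set" where
  "subtree c J = {ws. c # ws \<in> J}"

definition subtrees ::
    "nat \<Rightarrow> nat \<Rightarrow> (nat \<times> nat) list set \<Rightarrow> nat \<Rightarrow> nat \<Rightarrow> (nat \<times> nat) list set" where
  "subtrees k \<Delta> I = (\<lambda>a\<in>{..<\<Delta> - 1}. \<lambda>b\<in>{..<k - 1}. subtree (a, b) I)"

definition graft ::
    "nat \<Rightarrow> nat \<Rightarrow> bool \<Rightarrow> (nat \<Rightarrow> nat \<Rightarrow> (nat \<times> nat) list set) \<Rightarrow> (nat \<times> nat) list set" where
  "graft k \<Delta> r g = {xs. (xs = [] \<and> r) \<or>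
     (\<exists>a b ws. xs = (a, b) # ws \<and> a < \<Delta> - 1 \<and> b < k - 1 \<and> ws \<in> g a b)}"

lemma hvert_Suc_iff:
  "xs \<in> hvert k \<Delta> (Suc m) \<longleftrightarrow>
     xs = [] \<or> (\<exists>a b ws. xs = (a, b) # ws \<and> a < \<Delta> - 1 \<and> b < k - 1 \<and> ws \<in> hvert k \<Delta> m)"
  by (cases xs) (auto simp: hvert_def)

lemma hleaves_Suc_iff:
  "xs \<in> hleaves k \<Delta> (Suc m) \<longleftrightarrow>
     (\<exists>a b ws. xs = (a, b) # ws \<and> a < \<Delta> - 1 \<and> b < k - 1 \<and> ws \<in> hleaves k \<Delta> m)"
  by (cases xs) (auto simp: hvert_def hleaves_def)

lemma hleaves_0: "hleaves k \<Delta> 0 = {[]}"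
  by (auto simp: hleaves_def hvert_def)

lemma hleaves_subset_hvert: "hleaves k \<Delta> m \<subseteq> hvert k \<Delta> m"
  by (auto simp: hleaves_def)

lemma finite_hvert: "finite (hvert k \<Delta> m)"
proof -
  have "hvert k \<Delta> m = {xs. set xs \<subseteq> {..<\<Delta> - 1} \<times> {..<k - 1} \<and> length xs \<le> m}"
    by (auto simp: hvert_def)
  then show ?thesis
    by (simp add: finite_lists_length_le)
qed

lemma finite_hleaves: "finite (hleaves k \<Delta> m)"
  using finite_subset[OF hleaves_subset_hvert finite_hvert] .

lemma subtree_hleaves:
  "a < \<Delta> - 1 \<Longrightarrow> b < k - 1 \<Longrightarrow> subtree (a, b) (hleaves k \<Delta> (Suc m)) = hleaves k \<Delta> m"
  by (auto simp: subtree_def hleaves_Suc_iff)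

lemma subtree_subset_hleaves:
  "\<eta> \<subseteq> hleaves k \<Delta> (Suc m) \<Longrightarrow> subtree c \<eta> \<subseteq> hleaves k \<Delta> m"
  by (auto simp: subtree_def hleaves_Suc_iff)

lemma subtree_empty [simp]: "subtree c {} = {}"
  by (simp add: subtree_def)

lemma subtrees_apply:
  "a < \<Delta> - 1 \<Longrightarrow> b < k - 1 \<Longrightarrow> subtrees k \<Delta> I a b = subtree (a, b) I"
  by (simp add: subtrees_def)

lemma subtree_graft:
  "a < \<Delta> - 1 \<Longrightarrow> b < k - 1 \<Longrightarrow> subtree (a, b) (graft k \<Delta> r g) = g a b"
  by (auto simp: subtree_def graft_def)

lemma root_in_graft [simp]: "[] \<in> graft k \<Delta> r g \<longleftrightarrow> r"
  by (simp add: graft_def)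

lemma graft_subset_hvert:
  assumes "\<And>a b. a < \<Delta> - 1 \<Longrightarrow> b < k - 1 \<Longrightarrow> g a b \<subseteq> hvert k \<Delta> m"
  shows "graft k \<Delta> r g \<subseteq> hvert k \<Delta> (Suc m)"
proof
  fix xs
  assume "xs \<in> graft k \<Delta> r g"
  then consider "xs = []"
    | a b ws where "xs = (a, b) # ws" "a < \<Delta> - 1" "b < k - 1" "ws \<in> g a b"
    unfolding graft_def by blast
  then show "xs \<in> hvert k \<Delta> (Suc m)"
  proof cases
    case 1
    then show ?thesis
      by (simp add: hvert_def)
  next
    case (2 a b ws)
    then show ?thesis
      unfolding hvert_Suc_iff using assms by blast
  qed
qed

lemma graft_subtrees:
  assumes "I \<subseteq> hvert k \<Delta> (Suc m)"
  shows "graft k \<Delta> ([] \<in> I) (subtrees k \<Delta> I) = I"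
proof (intro equalityI subsetI)
  fix xs
  assume "xs \<in> I"
  with assms consider "xs = []" | a b ws where "xs = (a, b) # ws" "a < \<Delta> - 1" "b < k - 1"
    using hvert_Suc_iff[of xs] by blast
  then show "xs \<in> graft k \<Delta> ([] \<in> I) (subtrees k \<Delta> I)"
  proof cases
    case 1
    then show ?thesis
      using \<open>xs \<in> I\<close> by (simp add: graft_def)
  next
    case (2 a b ws)
    then have "ws \<in> subtrees k \<Delta> I a b"
      using \<open>xs \<in> I\<close> by (simp add: subtrees_apply subtree_def)
    with 2 show ?thesis
      unfolding graft_def by blast
  qed
next
  fix xs
  assume "xs \<in> graft k \<Delta> ([] \<in> I) (subtrees k \<Delta> I)"
  then consider "xs = []" "[] \<in> I"
    | a b ws where "xs = (a, b) # ws" "a < \<Delta> - 1" "b < k - 1" "ws \<in> subtrees k \<Delta> I a b"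
    unfolding graft_def by blast
  then show "xs \<in> I"
    by cases (auto simp: subtrees_apply subtree_def)
qed

lemma subtrees_graft:
  assumes g: "g \<in> (\<Pi>\<^sub>E a\<in>{..<\<Delta> - 1}. \<Pi>\<^sub>E b\<in>{..<k - 1}. G a b)"
  shows "subtrees k \<Delta> (graft k \<Delta> r g) = g"
proof (intro ext)
  fix a b
  show "subtrees k \<Delta> (graft k \<Delta> r g) a b = g a b"
  proof (cases "a < \<Delta> - 1")
    case True
    then have ga: "g a \<in> (\<Pi>\<^sub>E b\<in>{..<k - 1}. G a b)"
      using PiE_mem[OF g] by simp
    show ?thesis
    proof (cases "b < k - 1")
      case False
      then show ?thesis
        using True PiE_arb[OF ga] by (simp add: subtrees_def)
    qed (use True in \<open>simp add: subtrees_apply subtree_graft\<close>)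
  next
    case False
    then show ?thesis
      using PiE_arb[OF g] by (simp add: subtrees_def)
  qed
qed

subsection \<open>Independent sets with a prescribed boundary\<close>

definition indep_bc :: "nat \<Rightarrow> nat \<Rightarrow> nat \<Rightarrow> (nat \<times> nat) list set \<Rightarrow> (nat \<times> nat) list set set"
  where "indep_bc k \<Delta> n \<eta> = {I. hindep k \<Delta> n I \<and> I \<inter> hleaves k \<Delta> n = \<eta>}"

definition indep_bc_root ::
    "nat \<Rightarrow> nat \<Rightarrow> nat \<Rightarrow> (nat \<times> nat) list set \<Rightarrow> bool \<Rightarrow> (nat \<times> nat) list set set"
  where "indep_bc_root k \<Delta> n \<eta> r = {I \<in> indep_bc k \<Delta> n \<eta>. ([] \<in> I) = r}"

lemma hedgesI:
  "v \<in> hvert k \<Delta> n \<Longrightarrow> length v < n \<Longrightarrow> a < \<Delta> - 1 \<Longrightarrow>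
    insert v {v @ [(a, b)] | b. b < k - 1} \<in> hedges k \<Delta> n"
  unfolding hedges_def by blast

lemma hindep_Suc_iff:
  "hindep k \<Delta> (Suc m) I \<longleftrightarrow> I \<subseteq> hvert k \<Delta> (Suc m)
     \<and> ([] \<in> I \<longrightarrow> (\<forall>a<\<Delta> - 1. \<exists>b<k - 1. [] \<notin> subtree (a, b) I))
     \<and> (\<forall>a<\<Delta> - 1. \<forall>b<k - 1. hindep k \<Delta> m (subtree (a, b) I))"
proof (intro iffI conjI allI impI)
  assume indep: "hindep k \<Delta> (Suc m) I"
  then have edge_free: "\<not> e \<subseteq> I" if "e \<in> hedges k \<Delta> (Suc m)" for e
    using that by (auto simp: hindep_def)
  show "I \<subseteq> hvert k \<Delta> (Suc m)"
    using indep by (simp add: hindep_def)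
  {
    fix a
    assume "[] \<in> I" "a < \<Delta> - 1"
    then have "insert [] {[] @ [(a, b)] |b. b < k - 1} \<in> hedges k \<Delta> (Suc m)"
      by (intro hedgesI) (auto simp: hvert_def)
    from edge_free[OF this] \<open>[] \<in> I\<close> show "\<exists>b<k - 1. [] \<notin> subtree (a, b) I"
      by (auto simp: subtree_def)
  }
  fix a b
  assume ab: "a < \<Delta> - 1" "b < k - 1"
  show "hindep k \<Delta> m (subtree (a, b) I)"
    unfolding hindep_def
  proof (intro conjI ballI)
    show "subtree (a, b) I \<subseteq> hvert k \<Delta> m"
      using indep by (auto simp: subtree_def hindep_def hvert_Suc_iff)
  next
    fix e
    assume "e \<in> hedges k \<Delta> m"
    then obtain v a' where e: "e = insert v {v @ [(a', b')] |b'. b' < k - 1}"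
      and v: "v \<in> hvert k \<Delta> m" "length v < m" "a' < \<Delta> - 1"
      by (auto simp: hedges_def)
    have "insert ((a, b) # v) {((a, b) # v) @ [(a', b')] |b'. b' < k - 1} \<in> hedges k \<Delta> (Suc m)"
      using v ab by (intro hedgesI) (auto simp: hvert_def)
    from edge_free[OF this] show "\<not> e \<subseteq> subtree (a, b) I"
      unfolding e subtree_def by auto
  qed
next
  assume decomposed: "I \<subseteq> hvert k \<Delta> (Suc m)
     \<and> ([] \<in> I \<longrightarrow> (\<forall>a<\<Delta> - 1. \<exists>b<k - 1. [] \<notin> subtree (a, b) I))
     \<and> (\<forall>a<\<Delta> - 1. \<forall>b<k - 1. hindep k \<Delta> m (subtree (a, b) I))"
  show "hindep k \<Delta> (Suc m) I"
    unfolding hindep_def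
  proof (intro conjI ballI)
    show "I \<subseteq> hvert k \<Delta> (Suc m)"
      using decomposed by simp
  next
    fix e
    assume "e \<in> hedges k \<Delta> (Suc m)"
    then obtain v a' where e: "e = insert v {v @ [(a', b')] |b'. b' < k - 1}"
      and v: "v \<in> hvert k \<Delta> (Suc m)" "length v < Suc m" "a' < \<Delta> - 1"
      by (auto simp: hedges_def)
    show "\<not> e \<subseteq> I"
    proof (cases v)
      case Nil
      then show ?thesis
        using decomposed v e by (fastforce simp: subtree_def)
    next
      case (Cons c w)
      obtain a b where c: "c = (a, b)"
        by force
      with Cons v have ab: "a < \<Delta> - 1" "b < k - 1" and w: "w \<in> hvert k \<Delta> m" "length w < m"
        by (auto simp: hvert_def)
      have "insert w {w @ [(a', b')] |b'. b' < k - 1} \<in> hedges k \<Delta> m"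
        using w v by (intro hedgesI)
      moreover have "hindep k \<Delta> m (subtree (a, b) I)"
        using decomposed ab by blast
      ultimately have "\<not> insert w {w @ [(a', b')] |b'. b' < k - 1} \<subseteq> subtree (a, b) I"
        unfolding hindep_def by blast
      then show ?thesis
        unfolding e Cons c subtree_def by auto
    qed
  qed
qed

lemma boundary_Suc_iff:
  assumes "\<eta> \<subseteq> hleaves k \<Delta> (Suc m)"
  shows "I \<inter> hleaves k \<Delta> (Suc m) = \<eta> \<longleftrightarrow>
    (\<forall>a<\<Delta> - 1. \<forall>b<k - 1. subtree (a, b) I \<inter> hleaves k \<Delta> m = subtree (a, b) \<eta>)"
proof
  assume "I \<inter> hleaves k \<Delta> (Suc m) = \<eta>"
  then show "\<forall>a<\<Delta> - 1. \<forall>b<k - 1. subtree (a, b) I \<inter> hleaves k \<Delta> m = subtree (a, b) \<eta>"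
    by (auto simp: subtree_def hleaves_Suc_iff)
next
  assume children: "\<forall>a<\<Delta> - 1. \<forall>b<k - 1. subtree (a, b) I \<inter> hleaves k \<Delta> m = subtree (a, b) \<eta>"
  show "I \<inter> hleaves k \<Delta> (Suc m) = \<eta>"
  proof (intro equalityI subsetI)
    fix xs
    assume "xs \<in> I \<inter> hleaves k \<Delta> (Suc m)"
    then obtain a b ws where "xs = (a, b) # ws" "a < \<Delta> - 1" "b < k - 1"
      "ws \<in> subtree (a, b) I \<inter> hleaves k \<Delta> m"
      by (auto simp: hleaves_Suc_iff subtree_def)
    with children show "xs \<in> \<eta>"
      by (auto simp: subtree_def)
  next
    fix xs
    assume "xs \<in> \<eta>"
    with assms have "xs \<in> hleaves k \<Delta> (Suc m)"
      by blast
    then obtain a b ws where "xs = (a, b) # ws" "a < \<Delta> - 1" "b < k - 1" "ws \<in> hleaves k \<Delta> m"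
      unfolding hleaves_Suc_iff by blast
    moreover from this \<open>xs \<in> \<eta>\<close> have "ws \<in> subtree (a, b) \<eta>"
      by (simp add: subtree_def)
    ultimately show "xs \<in> I \<inter> hleaves k \<Delta> (Suc m)"
      using children by (auto simp: subtree_def hleaves_Suc_iff)
  qed
qed

lemma indep_bc_Suc_iff:
  assumes "\<eta> \<subseteq> hleaves k \<Delta> (Suc m)"
  shows "I \<in> indep_bc k \<Delta> (Suc m) \<eta> \<longleftrightarrow> I \<subseteq> hvert k \<Delta> (Suc m)
     \<and> ([] \<in> I \<longrightarrow> (\<forall>a<\<Delta> - 1. \<exists>b<k - 1. [] \<notin> subtree (a, b) I))
     \<and> (\<forall>a<\<Delta> - 1. \<forall>b<k - 1. subtree (a, b) I \<in> indep_bc k \<Delta> m (subtree (a, b) \<eta>))"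
  unfolding indep_bc_def mem_Collect_eq hindep_Suc_iff boundary_Suc_iff[OF assms] by blast

lemma finite_indep_bc: "finite (indep_bc k \<Delta> n \<eta>)"
proof (rule finite_subset)
  show "indep_bc k \<Delta> n \<eta> \<subseteq> Pow (hvert k \<Delta> n)"
    by (auto simp: indep_bc_def hindep_def)
qed (simp add: finite_hvert)

lemma indep_bc_root_subset: "indep_bc_root k \<Delta> n \<eta> r \<subseteq> indep_bc k \<Delta> n \<eta>"
  by (auto simp: indep_bc_root_def)

lemma card_indep_bc:
  "card (indep_bc k \<Delta> n \<eta>) = card (indep_bc_root k \<Delta> n \<eta> True) + card (indep_bc_root k \<Delta> n \<eta> False)"
proof -
  have "indep_bc k \<Delta> n \<eta> = indep_bc_root k \<Delta> n \<eta> True \<union> indep_bc_root k \<Delta> n \<eta> False"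
    by (auto simp: indep_bc_root_def)
  moreover have "indep_bc_root k \<Delta> n \<eta> True \<inter> indep_bc_root k \<Delta> n \<eta> False = {}"
    by (auto simp: indep_bc_root_def)
  ultimately show ?thesis
    using card_Un_disjoint finite_subset[OF indep_bc_root_subset finite_indep_bc] by metis
qed

lemma boundary_in_indep_bc:
  assumes "\<eta> \<subseteq> hleaves k \<Delta> n"
  shows "\<eta> \<in> indep_bc k \<Delta> n \<eta>"
proof -
  have "\<not> e \<subseteq> \<eta>" if "e \<in> hedges k \<Delta> n" for e
  proof -
    from that obtain v a where "e = insert v {v @ [(a, b)] |b. b < k - 1}" "length v < n"
      by (auto simp: hedges_def)
    moreover from \<open>length v < n\<close> have "v \<notin> \<eta>"
      using assms by (auto simp: hleaves_def)
    ultimately show ?thesis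
      by auto
  qed
  moreover have "\<eta> \<subseteq> hvert k \<Delta> n"
    using assms hleaves_subset_hvert by blast
  ultimately show ?thesis
    using assms by (auto simp: indep_bc_def hindep_def)
qed

lemma card_indep_bc_pos: "\<eta> \<subseteq> hleaves k \<Delta> n \<Longrightarrow> 0 < card (indep_bc k \<Delta> n \<eta>)"
  using boundary_in_indep_bc finite_indep_bc card_gt_0_iff by blast

text \<open>The subtree configurations compatible with the root status \<open>r\<close>: an occupied root
  excludes those in which some descending hyperedge has all its children occupied.\<close>

definition child_configs ::
    "nat \<Rightarrow> nat \<Rightarrow> nat \<Rightarrow> (nat \<times> nat) list set \<Rightarrow> bool \<Rightarrow> (nat \<Rightarrow> nat \<Rightarrow> (nat \<times> nat) list set) set"
  where "child_configs k \<Delta> m \<eta> r =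
    (\<Pi>\<^sub>E a\<in>{..<\<Delta> - 1}. (\<Pi>\<^sub>E b\<in>{..<k - 1}. indep_bc k \<Delta> m (subtree (a, b) \<eta>))
       - (if r then \<Pi>\<^sub>E b\<in>{..<k - 1}. indep_bc_root k \<Delta> m (subtree (a, b) \<eta>) True else {}))"

lemma child_configs_subset:
  "child_configs k \<Delta> m \<eta> r \<subseteq>
     (\<Pi>\<^sub>E a\<in>{..<\<Delta> - 1}. \<Pi>\<^sub>E b\<in>{..<k - 1}. indep_bc k \<Delta> m (subtree (a, b) \<eta>))"
  unfolding child_configs_def by (intro PiE_mono) blast

lemma restrict_in_PiE_Diff_PiE_iff:
  "restrict f A \<in> Pi\<^sub>E A S - Pi\<^sub>E A T \<longleftrightarrow> (\<forall>x\<in>A. f x \<in> S x) \<and> (\<exists>x\<in>A. f x \<notin> T x)"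
  by (auto simp: Pi_iff)

lemma subtrees_in_child_configs_iff:
  assumes "\<eta> \<subseteq> hleaves k \<Delta> (Suc m)" and "I \<subseteq> hvert k \<Delta> (Suc m)"
  shows "subtrees k \<Delta> I \<in> child_configs k \<Delta> m \<eta> ([] \<in> I) \<longleftrightarrow> I \<in> indep_bc k \<Delta> (Suc m) \<eta>"
proof -
  have "subtrees k \<Delta> I \<in> child_configs k \<Delta> m \<eta> r \<longleftrightarrow> (\<forall>a<\<Delta> - 1.
      (\<forall>b<k - 1. subtree (a, b) I \<in> indep_bc k \<Delta> m (subtree (a, b) \<eta>)) \<and>
      (r \<longrightarrow> (\<exists>b<k - 1. subtree (a, b) I \<notin> indep_bc_root k \<Delta> m (subtree (a, b) \<eta>) True)))"
    for r
    unfolding child_configs_def subtrees_def restrict_PiE_iff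
    by (cases r) (simp_all add: restrict_in_PiE_Diff_PiE_iff Pi_iff lessThan_iff Ball_def Bex_def)
  then show ?thesis
    unfolding indep_bc_Suc_iff[OF assms(1)] using assms(2) by (auto simp: indep_bc_root_def)
qed

lemma bij_betw_subtrees:
  assumes "\<eta> \<subseteq> hleaves k \<Delta> (Suc m)"
  shows "bij_betw (subtrees k \<Delta>) (indep_bc_root k \<Delta> (Suc m) \<eta> r) (child_configs k \<Delta> m \<eta> r)"
proof (rule bij_betw_byWitness[where f' = "graft k \<Delta> r"])
  have indep_subset: "I \<subseteq> hvert k \<Delta> n" if "I \<in> indep_bc k \<Delta> n \<zeta>" for I n \<zeta>
    using that by (simp add: indep_bc_def hindep_def)
  show "\<forall>I\<in>indep_bc_root k \<Delta> (Suc m) \<eta> r. graft k \<Delta> r (subtrees k \<Delta> I) = I"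
  proof
    fix I
    assume "I \<in> indep_bc_root k \<Delta> (Suc m) \<eta> r"
    then have "I \<subseteq> hvert k \<Delta> (Suc m)" "([] \<in> I) = r"
      using indep_subset by (auto simp: indep_bc_root_def)
    then show "graft k \<Delta> r (subtrees k \<Delta> I) = I"
      using graft_subtrees[of I] by simp
  qed
  show "\<forall>g\<in>child_configs k \<Delta> m \<eta> r. subtrees k \<Delta> (graft k \<Delta> r g) = g"
  proof
    fix g
    assume "g \<in> child_configs k \<Delta> m \<eta> r"
    then show "subtrees k \<Delta> (graft k \<Delta> r g) = g"
      by (rule subtrees_graft[OF subsetD[OF child_configs_subset]])
  qed
  show "subtrees k \<Delta> ` indep_bc_root k \<Delta> (Suc m) \<eta> r \<subseteq> child_configs k \<Delta> m \<eta> r"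
  proof (rule image_subsetI)
    fix I
    assume "I \<in> indep_bc_root k \<Delta> (Suc m) \<eta> r"
    then have "I \<in> indep_bc k \<Delta> (Suc m) \<eta>" "([] \<in> I) = r"
      by (auto simp: indep_bc_root_def)
    then show "subtrees k \<Delta> I \<in> child_configs k \<Delta> m \<eta> r"
      using subtrees_in_child_configs_iff[OF assms indep_subset] by blast
  qed
  show "graft k \<Delta> r ` child_configs k \<Delta> m \<eta> r \<subseteq> indep_bc_root k \<Delta> (Suc m) \<eta> r"
  proof (rule image_subsetI)
    fix g
    assume g: "g \<in> child_configs k \<Delta> m \<eta> r"
    then have g_Pi: "g \<in> (\<Pi>\<^sub>E a\<in>{..<\<Delta> - 1}. \<Pi>\<^sub>E b\<in>{..<k - 1}. indep_bc k \<Delta> m (subtree (a, b) \<eta>))"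
      by (rule subsetD[OF child_configs_subset])
    have "g a b \<subseteq> hvert k \<Delta> m" if "a < \<Delta> - 1" "b < k - 1" for a b
    proof -
      have "g a \<in> (\<Pi>\<^sub>E b\<in>{..<k - 1}. indep_bc k \<Delta> m (subtree (a, b) \<eta>))"
        using PiE_mem[OF g_Pi] that by simp
      then have "g a b \<in> indep_bc k \<Delta> m (subtree (a, b) \<eta>)"
        by (rule PiE_mem) (use that in simp)
      then show ?thesis
        by (rule indep_subset)
    qed
    then have "graft k \<Delta> r g \<subseteq> hvert k \<Delta> (Suc m)"
      by (rule graft_subset_hvert)
    moreover have "subtrees k \<Delta> (graft k \<Delta> r g) \<in> child_configs k \<Delta> m \<eta> ([] \<in> graft k \<Delta> r g)"
      using g subtrees_graft[OF g_Pi] by simp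
    ultimately have "graft k \<Delta> r g \<in> indep_bc k \<Delta> (Suc m) \<eta>"
      using subtrees_in_child_configs_iff[OF assms] by blast
    then show "graft k \<Delta> r g \<in> indep_bc_root k \<Delta> (Suc m) \<eta> r"
      by (simp add: indep_bc_root_def)
  qed
qed

subsection \<open>The tree recursion\<close>

definition hrec :: "nat \<Rightarrow> nat \<Rightarrow> (nat \<Rightarrow> nat \<Rightarrow> real) \<Rightarrow> real" where
  "hrec k \<Delta> x = (\<Prod>a<\<Delta> - 1. 1 - (\<Prod>b<k - 1. x a b)) / (1 + (\<Prod>a<\<Delta> - 1. 1 - (\<Prod>b<k - 1. x a b)))"

lemma card_PiE_Diff_PiE:
  assumes "finite A" and "\<And>x. x \<in> A \<Longrightarrow> T x \<subseteq> S x" and "\<And>x. x \<in> A \<Longrightarrow> finite (S x)"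
  shows "real (card (Pi\<^sub>E A S - Pi\<^sub>E A T)) = (\<Prod>x\<in>A. real (card (S x))) - (\<Prod>x\<in>A. real (card (T x)))"
proof -
  have sub: "Pi\<^sub>E A T \<subseteq> Pi\<^sub>E A S"
    using assms(2) by (rule PiE_mono)
  have fin: "finite (Pi\<^sub>E A S)"
    using assms(1,3) by (rule finite_PiE)
  have "card (Pi\<^sub>E A S - Pi\<^sub>E A T) = card (Pi\<^sub>E A S) - card (Pi\<^sub>E A T)"
    using card_Diff_subset[OF finite_subset[OF sub fin] sub] .
  moreover have "card (Pi\<^sub>E A T) \<le> card (Pi\<^sub>E A S)"
    using card_mono[OF fin sub] .
  ultimately show ?thesis
    using assms(1) by (simp add: of_nat_diff card_PiE of_nat_prod)
qed

lemma card_child_configs: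
  "real (card (child_configs k \<Delta> m \<eta> r)) = (\<Prod>a<\<Delta> - 1.
     (\<Prod>b<k - 1. real (card (indep_bc k \<Delta> m (subtree (a, b) \<eta>))))
     - (if r then \<Prod>b<k - 1. real (card (indep_bc_root k \<Delta> m (subtree (a, b) \<eta>) True)) else 0))"
proof -
  have "real (card ((\<Pi>\<^sub>E b\<in>{..<k - 1}. indep_bc k \<Delta> m (subtree (a, b) \<eta>))
       - (if r then \<Pi>\<^sub>E b\<in>{..<k - 1}. indep_bc_root k \<Delta> m (subtree (a, b) \<eta>) True else {})))
    = (\<Prod>b<k - 1. real (card (indep_bc k \<Delta> m (subtree (a, b) \<eta>))))
     - (if r then \<Prod>b<k - 1. real (card (indep_bc_root k \<Delta> m (subtree (a, b) \<eta>) True)) else 0)"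
    for a
    by (cases r) (simp_all add: card_PiE_Diff_PiE indep_bc_root_subset finite_indep_bc card_PiE)
  then show ?thesis
    unfolding child_configs_def by (simp add: card_PiE of_nat_prod)
qed

lemma hrec_ratio:
  fixes S T :: "nat \<Rightarrow> nat \<Rightarrow> real"
  assumes "\<And>a b. a < \<Delta> - 1 \<Longrightarrow> b < k - 1 \<Longrightarrow> 0 < S a b \<and> 0 \<le> T a b \<and> T a b \<le> S a b"
  shows "(\<Prod>a<\<Delta> - 1. (\<Prod>b<k - 1. S a b) - (\<Prod>b<k - 1. T a b))
      / ((\<Prod>a<\<Delta> - 1. (\<Prod>b<k - 1. S a b) - (\<Prod>b<k - 1. T a b)) + (\<Prod>a<\<Delta> - 1. \<Prod>b<k - 1. S a b))
    = hrec k \<Delta> (\<lambda>a b. T a b / S a b)"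
proof -
  define Q where "Q = (\<Prod>a<\<Delta> - 1. \<Prod>b<k - 1. S a b)"
  define R where "R = (\<Prod>a<\<Delta> - 1. 1 - (\<Prod>b<k - 1. T a b / S a b))"
  have S_prod_pos: "0 < (\<Prod>b<k - 1. S a b)" if "a < \<Delta> - 1" for a
    using assms that by (intro prod_pos) auto
  have "(\<Prod>b<k - 1. S a b) - (\<Prod>b<k - 1. T a b) = (\<Prod>b<k - 1. S a b) * (1 - (\<Prod>b<k - 1. T a b / S a b))"
    if "a < \<Delta> - 1" for a
  proof -
    have cancel: "P - X = P * (1 - X / P)" if "P \<noteq> 0" for P X :: real
      using that by (simp add: field_simps)
    show ?thesis
      unfolding prod_dividef by (rule cancel) (use S_prod_pos[OF that] in linarith)
  qed
  then have numerator: "(\<Prod>a<\<Delta> - 1. (\<Prod>b<k - 1. S a b) - (\<Prod>b<k - 1. T a b)) = Q * R"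
    unfolding Q_def R_def prod.distrib[symmetric] by (intro prod.cong) auto
  have "0 < Q"
    unfolding Q_def by (rule prod_pos) (use S_prod_pos in auto)
  moreover have "0 \<le> R"
  proof -
    have "0 \<le> T a b / S a b \<and> T a b / S a b \<le> 1" if "a < \<Delta> - 1" "b < k - 1" for a b
      using assms[OF that] by simp
    then have "(\<Prod>b<k - 1. T a b / S a b) \<le> 1" if "a < \<Delta> - 1" for a
      using that by (intro prod_le_1) auto
    then show ?thesis
      unfolding R_def by (intro prod_nonneg) simp
  qed
  ultimately have "Q * R / (Q * R + Q) = R / (1 + R)"
    by (simp add: distrib_left[of Q R 1, symmetric, simplified])
  then show ?thesis
    unfolding numerator Q_def[symmetric] hrec_def R_def .
qed

lemma hcond_eq_card:
  "hcond k \<Delta> n \<eta> = real (card (indep_bc_root k \<Delta> n \<eta> True)) / real (card (indep_bc k \<Delta> n \<eta>))"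
proof -
  have "{I. hindep k \<Delta> n I \<and> [] \<in> I \<and> I \<inter> hleaves k \<Delta> n = \<eta>} = indep_bc_root k \<Delta> n \<eta> True"
    by (auto simp: indep_bc_root_def indep_bc_def)
  moreover have "{I. hindep k \<Delta> n I \<and> I \<inter> hleaves k \<Delta> n = \<eta>} = indep_bc k \<Delta> n \<eta>"
    by (simp add: indep_bc_def)
  ultimately show ?thesis
    by (simp add: hcond_def)
qed

lemma hcond_Suc:
  assumes "\<eta> \<subseteq> hleaves k \<Delta> (Suc m)"
  shows "hcond k \<Delta> (Suc m) \<eta> = hrec k \<Delta> (\<lambda>a b. hcond k \<Delta> m (subtree (a, b) \<eta>))"
proof -
  define S where "S a b = real (card (indep_bc k \<Delta> m (subtree (a, b) \<eta>)))" for a b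
  define T where "T a b = real (card (indep_bc_root k \<Delta> m (subtree (a, b) \<eta>) True))" for a b
  have card_root: "real (card (indep_bc_root k \<Delta> (Suc m) \<eta> r)) =
      (\<Prod>a<\<Delta> - 1. (\<Prod>b<k - 1. S a b) - (if r then \<Prod>b<k - 1. T a b else 0))" for r
    unfolding S_def T_def card_child_configs[symmetric]
    using bij_betw_same_card[OF bij_betw_subtrees[OF assms]] by simp
  have bounds: "0 < S a b \<and> 0 \<le> T a b \<and> T a b \<le> S a b" for a b
    unfolding S_def T_def
    using card_indep_bc_pos[OF subtree_subset_hleaves[OF assms]]
      card_mono[OF finite_indep_bc indep_bc_root_subset] by simp
  have "hcond k \<Delta> (Suc m) \<eta> =
      (\<Prod>a<\<Delta> - 1. (\<Prod>b<k - 1. S a b) - (\<Prod>b<k - 1. T a b))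
      / ((\<Prod>a<\<Delta> - 1. (\<Prod>b<k - 1. S a b) - (\<Prod>b<k - 1. T a b)) + (\<Prod>a<\<Delta> - 1. \<Prod>b<k - 1. S a b))"
    using card_root[of True] card_root[of False]
    by (simp add: hcond_eq_card card_indep_bc)
  also have "\<dots> = hrec k \<Delta> (\<lambda>a b. T a b / S a b)"
    using bounds by (intro hrec_ratio)
  finally have "hcond k \<Delta> (Suc m) \<eta> = hrec k \<Delta> (\<lambda>a b. T a b / S a b)" .
  then show ?thesis
    unfolding S_def T_def hcond_eq_card .
qed

lemma hrec_antimono:
  assumes "\<And>a b. a < \<Delta> - 1 \<Longrightarrow> b < k - 1 \<Longrightarrow> 0 \<le> x a b \<and> x a b \<le> y a b \<and> y a b \<le> 1"
  shows "hrec k \<Delta> y \<le> hrec k \<Delta> x"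
proof -
  define Rx where "Rx = (\<Prod>a<\<Delta> - 1. 1 - (\<Prod>b<k - 1. x a b))"
  define Ry where "Ry = (\<Prod>a<\<Delta> - 1. 1 - (\<Prod>b<k - 1. y a b))"
  have factor: "0 \<le> 1 - (\<Prod>b<k - 1. y a b) \<and> 1 - (\<Prod>b<k - 1. y a b) \<le> 1 - (\<Prod>b<k - 1. x a b)"
    if "a < \<Delta> - 1" for a
  proof -
    have "(\<Prod>b<k - 1. x a b) \<le> (\<Prod>b<k - 1. y a b)"
      by (rule prod_mono) (use assms that in auto)
    moreover have "(\<Prod>b<k - 1. y a b) \<le> 1"
      by (rule prod_le_1) (use assms that in force)
    ultimately show ?thesis
      by simp
  qed
  have "Ry \<le> Rx"
    unfolding Rx_def Ry_def by (rule prod_mono) (use factor in auto)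
  moreover have "0 \<le> Ry"
    unfolding Ry_def by (rule prod_nonneg) (use factor in auto)
  ultimately have "Ry / (1 + Ry) \<le> Rx / (1 + Rx)"
    by (simp add: divide_simps) (simp add: algebra_simps)
  then show ?thesis
    unfolding hrec_def Rx_def Ry_def .
qed

lemma hrec_const_one: "2 \<le> \<Delta> \<Longrightarrow> hrec k \<Delta> (\<lambda>a b. 1) = 0"
  by (simp add: hrec_def prod_zero_iff)

subsection \<open>Extremal boundary conditions\<close>

lemma hcond_nonneg: "0 \<le> hcond k \<Delta> n \<eta>"
  by (simp add: hcond_eq_card)

lemma hcond_le_one: "hcond k \<Delta> n \<eta> \<le> 1"
  unfolding hcond_eq_card
  using card_mono[OF finite_indep_bc indep_bc_root_subset] by (auto simp: divide_le_eq_1)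

lemma hcond_0_hleaves: "hcond k \<Delta> 0 (hleaves k \<Delta> 0) = 1"
proof -
  have "indep_bc_root k \<Delta> 0 (hleaves k \<Delta> 0) True = indep_bc k \<Delta> 0 (hleaves k \<Delta> 0)"
    by (auto simp: indep_bc_root_def indep_bc_def hleaves_0)
  then show ?thesis
    using card_indep_bc_pos[of "hleaves k \<Delta> 0" k \<Delta> 0] by (simp add: hcond_eq_card)
qed

lemma hcond_0_empty: "hcond k \<Delta> 0 {} = 0"
proof -
  have "indep_bc_root k \<Delta> 0 {} True = {}"
    by (auto simp: indep_bc_root_def indep_bc_def hleaves_0)
  then show ?thesis
    by (simp add: hcond_eq_card)
qed

lemma hcond_Suc_hleaves:
  "hcond k \<Delta> (Suc m) (hleaves k \<Delta> (Suc m)) = hrec k \<Delta> (\<lambda>a b. hcond k \<Delta> m (hleaves k \<Delta> m))"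
proof -
  have "hcond k \<Delta> (Suc m) (hleaves k \<Delta> (Suc m)) =
      hrec k \<Delta> (\<lambda>a b. hcond k \<Delta> m (subtree (a, b) (hleaves k \<Delta> (Suc m))))"
    by (rule hcond_Suc) simp
  also have "\<dots> = hrec k \<Delta> (\<lambda>a b. hcond k \<Delta> m (hleaves k \<Delta> m))"
    unfolding hrec_def by (intro arg_cong2[where f = "(/)"] arg_cong2[where f = "(+)"] prod.cong
        arg_cong2[where f = "(-)"] refl) (auto simp: subtree_hleaves)
  finally show ?thesis .
qed

lemma hcond_Suc_empty: "hcond k \<Delta> (Suc m) {} = hrec k \<Delta> (\<lambda>a b. hcond k \<Delta> m {})"
  using hcond_Suc[of "{}" k \<Delta> m] by simp

lemma hcond_between_extremes:
  assumes "\<eta> \<subseteq> hleaves k \<Delta> m"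
  shows "min (hcond k \<Delta> m (hleaves k \<Delta> m)) (hcond k \<Delta> m {}) \<le> hcond k \<Delta> m \<eta>
       \<and> hcond k \<Delta> m \<eta> \<le> max (hcond k \<Delta> m (hleaves k \<Delta> m)) (hcond k \<Delta> m {})"
  using assms
proof (induction m arbitrary: \<eta>)
  case 0
  then have "\<eta> = {} \<or> \<eta> = hleaves k \<Delta> 0"
    by (auto simp: hleaves_0)
  then show ?case
    by auto
next
  case (Suc m)
  let ?lo = "min (hcond k \<Delta> m (hleaves k \<Delta> m)) (hcond k \<Delta> m {})"
  let ?hi = "max (hcond k \<Delta> m (hleaves k \<Delta> m)) (hcond k \<Delta> m {})"
  have children: "?lo \<le> hcond k \<Delta> m (subtree c \<eta>) \<and> hcond k \<Delta> m (subtree c \<eta>) \<le> ?hi" for c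
    using Suc.IH[OF subtree_subset_hleaves[OF Suc.prems]] .
  have "hrec k \<Delta> (\<lambda>a b. ?hi) \<le> hrec k \<Delta> (\<lambda>a b. hcond k \<Delta> m (subtree (a, b) \<eta>))"
    by (rule hrec_antimono) (use children hcond_nonneg hcond_le_one in auto)
  moreover have "hrec k \<Delta> (\<lambda>a b. hcond k \<Delta> m (subtree (a, b) \<eta>)) \<le> hrec k \<Delta> (\<lambda>a b. ?lo)"
    by (rule hrec_antimono) (use children hcond_nonneg hcond_le_one in auto)
  moreover have "?hi = hcond k \<Delta> m (hleaves k \<Delta> m) \<and> ?lo = hcond k \<Delta> m {}
      \<or> ?hi = hcond k \<Delta> m {} \<and> ?lo = hcond k \<Delta> m (hleaves k \<Delta> m)"
    by linarith
  ultimately show ?case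
    unfolding hcond_Suc[OF Suc.prems] hcond_Suc_hleaves hcond_Suc_empty by auto
qed

text \<open>Occupying all leaves at depth \<open>n + 1\<close> forces every vertex at depth \<open>n\<close> out, which is
  the empty boundary condition at depth \<open>n\<close>.\<close>

lemma hp_Suc: "2 \<le> \<Delta> \<Longrightarrow> hp k \<Delta> (Suc n) = hcond k \<Delta> n {}"
proof (induction n)
  case 0
  then show ?case
    by (simp add: hp_def hcond_Suc_hleaves hcond_0_hleaves hcond_0_empty hrec_const_one)
next
  case (Suc n)
  then show ?case
    by (simp add: hp_def hcond_Suc_hleaves[of k \<Delta> "Suc n"] hcond_Suc_empty)
qed

lemma Max_hcond_diff:
  "Max {\<bar>hcond k \<Delta> n \<eta> - hcond k \<Delta> n \<eta>'\<bar> | \<eta> \<eta>'. \<eta> \<subseteq> hleaves k \<Delta> n \<and> \<eta>' \<subseteq> hleaves k \<Delta> n}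
   = \<bar>hcond k \<Delta> n (hleaves k \<Delta> n) - hcond k \<Delta> n {}\<bar>"
proof (rule Max_eqI)
  have "{\<bar>hcond k \<Delta> n \<eta> - hcond k \<Delta> n \<eta>'\<bar> | \<eta> \<eta>'. \<eta> \<subseteq> hleaves k \<Delta> n \<and> \<eta>' \<subseteq> hleaves k \<Delta> n}
     = (\<lambda>(\<eta>, \<eta>'). \<bar>hcond k \<Delta> n \<eta> - hcond k \<Delta> n \<eta>'\<bar>) ` (Pow (hleaves k \<Delta> n) \<times> Pow (hleaves k \<Delta> n))"
    by auto
  then show "finite {\<bar>hcond k \<Delta> n \<eta> - hcond k \<Delta> n \<eta>'\<bar> | \<eta> \<eta>'.
      \<eta> \<subseteq> hleaves k \<Delta> n \<and> \<eta>' \<subseteq> hleaves k \<Delta> n}"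
    by (simp add: finite_hleaves)
next
  fix d
  assume "d \<in> {\<bar>hcond k \<Delta> n \<eta> - hcond k \<Delta> n \<eta>'\<bar> | \<eta> \<eta>'.
      \<eta> \<subseteq> hleaves k \<Delta> n \<and> \<eta>' \<subseteq> hleaves k \<Delta> n}"
  then obtain \<eta> \<eta>' where d: "d = \<bar>hcond k \<Delta> n \<eta> - hcond k \<Delta> n \<eta>'\<bar>"
    and "\<eta> \<subseteq> hleaves k \<Delta> n" "\<eta>' \<subseteq> hleaves k \<Delta> n"
    by blast
  from hcond_between_extremes[OF this(2)] hcond_between_extremes[OF this(3)]
  show "d \<le> \<bar>hcond k \<Delta> n (hleaves k \<Delta> n) - hcond k \<Delta> n {}\<bar>"
    unfolding d by (auto simp: min_def max_def split: if_splits)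
qed blast

theorem lemma55:
  fixes k \<Delta> :: nat
  assumes "k \<ge> 2" and "\<Delta> \<ge> 2"
  shows "huniqueness k \<Delta> \<longleftrightarrow> limsup (\<lambda>n. ereal \<bar>hp k \<Delta> (n + 1) - hp k \<Delta> n\<bar>) = 0"
proof -
  have "Max {\<bar>hcond k \<Delta> n \<eta> - hcond k \<Delta> n \<eta>'\<bar> | \<eta> \<eta>'. \<eta> \<subseteq> hleaves k \<Delta> n \<and> \<eta>' \<subseteq> hleaves k \<Delta> n}
      = \<bar>hp k \<Delta> (n + 1) - hp k \<Delta> n\<bar>" for n
    unfolding Max_hcond_diff using hp_Suc[OF assms(2), of k n] by (simp add: hp_def abs_minus_commute)
  then show ?thesis
    unfolding huniqueness_def by simp
qed

end
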